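(* Let $N\ge1$, $M\in\mathbb{N}^*$, $p\in[1,\infty)$, and let $(u_k)_{k\ge1}$ be a sequence of nonnegative numbers. Let $\psi\in C^\infty_c(\mathbb{R})$ be a function which is not a polynomial of degree at most $M-1$ and with $\mathrm{supp}(\psi)\subset[-\eta,\eta]$ for some $\eta\ge1$, and set \[f(x_1,\dots,x_N)=\sum_{k\ge1}u_k\,\psi\!\left(\frac{x_1-2(M+\eta)k}{2^{-k}}\right)\cdots\psi\!\left(\frac{x_N-2(M+\eta)k}{2^{-k}}\right).\] Then there is a constant $c>0$ depending only on $N$, $p$, $M$ and $\psi$ such that for every $j\ge1$, \[\sup_{2^{-(j+1)}\le|h|\le2^{-j}}\|\Delta_h^Mf\|_{L^p(\mathbb{R}^N)}\ge c\,u_j\,2^{-jN/p}.\]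
   Context: $\Delta_h^Mf(x):=\sum_{j=0}^M(-1)^{M-j}\binom{M}{j}f(x+jh)$ for $x,h\in\mathbb{R}^N$. *)

theory Defs
  imports "HOL-Analysis.Analysis" "HOL-Computational_Algebra.Polynomial"
begin

definition smooth_real :: "(real \<Rightarrow> real) \<Rightarrow> bool" where
  "smooth_real g \<longleftrightarrow> (\<forall>n x. ((deriv ^^ n) g) differentiable (at x))"

definition fdiff :: "nat \<Rightarrow> 'a::real_vector \<Rightarrow> ('a \<Rightarrow> real) \<Rightarrow> 'a \<Rightarrow> real" where
  "fdiff M h f x = (\<Sum>j=0..M. (-1) ^ (M - j) * real (M choose j) * f (x + real j *\<^sub>R h))"

definition Lp_norm :: "real \<Rightarrow> ('a::euclidean_space \<Rightarrow> real) \<Rightarrow> ennreal" where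
  "Lp_norm p g = (let I = (\<integral>\<^sup>+ x. ennreal (\<bar>g x\<bar> powr p) \<partial>lebesgue) in
     if I = \<infinity> then \<infinity> else ennreal ((enn2real I) powr (1 / p)))"

text \<open>The function f of the statement (sum over k \<ge> 1, written with index Suc k).\<close>
definition fsum :: "nat \<Rightarrow> real \<Rightarrow> (real \<Rightarrow> real) \<Rightarrow> (nat \<Rightarrow> real) \<Rightarrow> real ^ 'n \<Rightarrow> real" where
  "fsum M \<eta> \<psi> u x = (\<Sum>k. u (Suc k) *
      (\<Prod>i\<in>UNIV. \<psi> ((x $ i - 2 * (real M + \<eta>) * real (Suc k)) / 2 powr (- real (Suc k)))))"

end

theory Submission
  imports Defs
begin

text \<open>
  Write \<open>\<Psi>(y) = \<psi>(y\<^sub>1) \<cdots> \<psi>(y\<^sub>N)\<close> for the tensor power of \<open>\<psi>\<close>. Since \<open>\<psi>\<close> vanishes on a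
  left half-line and is not identically zero (the only use of the non-polynomial hypothesis),
  its difference \<open>\<Delta>\<^sub>1\<^sup>M\<psi>\<close> with unit step is not identically zero either: the equation
  \<open>\<Delta>\<^sub>1\<^sup>M\<psi>(t) = 0\<close> expresses \<open>\<psi>(t + M)\<close> through \<open>\<psi>(t), \<dots>, \<psi>(t + M - 1)\<close> and so propagates
  zeros to the right. If \<open>\<Delta>\<^sub>1\<^sup>M\<psi>(t\<^sub>0) \<noteq> 0\<close> and \<open>\<psi>(s\<^sub>0) \<noteq> 0\<close>, then the difference of \<open>\<Psi>\<close> along a
  coordinate axis \<open>e\<^sub>i\<close> is nonzero at \<open>(t\<^sub>0, s\<^sub>0, \<dots>, s\<^sub>0)\<close>, hence, by continuity (the only use of
  smoothness), at least some \<open>\<delta> > 0\<close> in absolute value on a cube of side \<open>2r\<close> around it.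
  The summands of \<open>f\<close> are copies of \<open>\<Psi>\<close> rescaled by \<open>2\<^sup>-\<^sup>k\<close> whose supports are separated by
  more than \<open>M\<close> steps of length \<open>\<le> 1/2\<close>, so for \<open>h = 2\<^sup>-\<^sup>j e\<^sub>i\<close> the function \<open>\<Delta>\<^sub>h\<^sup>Mf\<close> equals
  \<open>u\<^sub>j\<close> times the rescaled difference of \<open>\<Psi>\<close> on the rescaled cube, of volume \<open>(2r 2\<^sup>-\<^sup>j)\<^sup>N\<close>.
  Integrating gives the bound with \<open>c = \<delta> (2r)\<^sup>N\<^sup>/\<^sup>p\<close>.
\<close>

definition tensor_pow :: "(real \<Rightarrow> real) \<Rightarrow> real ^ 'n \<Rightarrow> real" where
  "tensor_pow \<psi> y = (\<Prod>i\<in>UNIV. \<psi> (y $ i))"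

lemma mem_cube_cart_iff:
  fixes c y :: "real ^ 'n"
  shows "y \<in> cbox (c - vec r) (c + vec r) \<longleftrightarrow> (\<forall>k. \<bar>y $ k - c $ k\<bar> \<le> r)"
  by (auto simp: mem_box_cart abs_le_iff algebra_simps)

lemma fdiff_cong:
  assumes "\<And>l. l \<le> M \<Longrightarrow> f (x + real l *\<^sub>R h) = g (x + real l *\<^sub>R h)"
  shows "fdiff M h f x = fdiff M h g x"
  unfolding fdiff_def using assms by (intro sum.cong) auto

lemma fdiff_cmult: "fdiff M h (\<lambda>x. c * f x) x = c * fdiff M h f x"
  unfolding fdiff_def sum_distrib_left by (intro sum.cong) auto

lemma fdiff_affine:
  "fdiff M (q *\<^sub>R h) f (a + q *\<^sub>R y) = fdiff M h (\<lambda>z. f (a + q *\<^sub>R z)) y"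
  unfolding fdiff_def by (simp add: scaleR_add_right add.assoc mult.commute)

lemma fdiff_neq_0E:
  assumes "fdiff M h f x \<noteq> 0"
  obtains l where "l \<le> M" "f (x + real l *\<^sub>R h) \<noteq> 0"
  using assms unfolding fdiff_def by (metis (no_types, lifting) atLeastAtMost_iff mult_zero_right sum.neutral)

lemma continuous_on_fdiff:
  fixes f :: "'a::real_normed_vector \<Rightarrow> real"
  assumes "continuous_on UNIV f"
  shows "continuous_on UNIV (fdiff M h f)"
proof -
  have "continuous_on UNIV (\<lambda>x. f (x + real l *\<^sub>R h))" for l
    by (rule continuous_on_compose2[OF assms]) (auto intro!: continuous_intros)
  then show ?thesis
    unfolding fdiff_def[abs_def] by (intro continuous_intros)
qed

lemma fdiff_1_eq_0_imp_eq_0: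
  fixes \<psi> :: "real \<Rightarrow> real"
  assumes fdiff0: "\<And>t. fdiff M 1 \<psi> t = 0" and left: "\<And>x. x < a \<Longrightarrow> \<psi> x = 0"
  shows "\<psi> x = 0"
proof -
  have top: "\<psi> (t + real M) = 0" if "\<And>l. l < M \<Longrightarrow> \<psi> (t + real l) = 0" for t
  proof -
    have "fdiff M 1 \<psi> t = \<psi> (t + real M)
        + (\<Sum>l=0..<M. (-1) ^ (M - l) * real (M choose l) * \<psi> (t + real l))"
      unfolding fdiff_def by (simp add: atLeastLessThanSuc_atLeastAtMost[symmetric])
    also have "(\<Sum>l=0..<M. (-1) ^ (M - l) * real (M choose l) * \<psi> (t + real l)) = 0"
      using that by (intro sum.neutral) auto
    finally show ?thesis using fdiff0[of t] by simp
  qed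
  have shifts: "\<psi> (w + real n) = 0" if w: "w < a - real M" for w n
  proof (induction n rule: less_induct)
    case (less n)
    show ?case
    proof (cases "n < M")
      case True
      then show ?thesis using w by (intro left) simp
    next
      case False
      have "\<psi> (w + real (n - M) + real M) = 0"
      proof (rule top)
        fix l assume "l < M"
        with False less[of "n - M + l"] show "\<psi> (w + real (n - M) + real l) = 0"
          by (simp add: of_nat_diff algebra_simps)
      qed
      with False show ?thesis by (simp add: add.assoc)
    qed
  qed
  define n where "n = nat \<lceil>x - a + real M\<rceil> + 1"
  have "x - real n < a - real M" unfolding n_def by linarith
  from shifts[OF this, of n] show ?thesis by simp
qed

lemma fdiff_axis_tensor_pow:
  "fdiff M (axis i 1) (tensor_pow \<psi>) y = fdiff M 1 \<psi> (y $ i) * (\<Prod>k\<in>UNIV - {i}. \<psi> (y $ k))"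
proof -
  have "tensor_pow \<psi> (y + real l *\<^sub>R axis i 1) = \<psi> (y $ i + real l) * (\<Prod>k\<in>UNIV - {i}. \<psi> (y $ k))" for l
  proof -
    have "tensor_pow \<psi> (y + real l *\<^sub>R axis i 1)
        = \<psi> (y $ i + real l) * (\<Prod>k\<in>UNIV - {i}. \<psi> ((y + real l *\<^sub>R axis i 1) $ k))"
      unfolding tensor_pow_def by (subst prod.remove[of UNIV i]) (auto simp: axis_def)
    also have "(\<Prod>k\<in>UNIV - {i}. \<psi> ((y + real l *\<^sub>R axis i 1) $ k)) = (\<Prod>k\<in>UNIV - {i}. \<psi> (y $ k))"
      by (intro prod.cong) (auto simp: axis_def)
    finally show ?thesis .
  qed
  then show ?thesis
    unfolding fdiff_def sum_distrib_right by (simp add: mult.assoc)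
qed

lemma continuous_on_tensor_pow:
  assumes "continuous_on UNIV \<psi>"
  shows "continuous_on UNIV (tensor_pow \<psi> :: real ^ 'n \<Rightarrow> real)"
proof -
  have "continuous_on UNIV (\<lambda>y :: real ^ 'n. \<psi> (y $ i))" for i
    by (rule continuous_on_compose2[OF assms]) (auto intro!: continuous_intros)
  then show ?thesis
    unfolding tensor_pow_def[abs_def] by (intro continuous_intros)
qed

lemma smooth_real_imp_continuous: "smooth_real \<psi> \<Longrightarrow> continuous_on UNIV \<psi>"
  unfolding smooth_real_def
  by (metis funpow_0 continuous_at_imp_continuous_on differentiable_imp_continuous_within)

lemma continuous_at_abs_ge_half_on_cube:
  fixes G :: "real ^ 'n \<Rightarrow> real"
  assumes "continuous (at y0) G" and "G y0 \<noteq> 0"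
  obtains r where "r > 0" "\<forall>y \<in> cbox (y0 - vec r) (y0 + vec r). \<bar>G y0\<bar> / 2 \<le> \<bar>G y\<bar>"
proof -
  obtain \<epsilon> where "\<epsilon> > 0" and \<epsilon>: "\<And>y. dist y y0 < \<epsilon> \<Longrightarrow> dist (G y) (G y0) < \<bar>G y0\<bar> / 2"
    using assms unfolding continuous_at_eps_delta by (metis half_gt_zero zero_less_abs_iff)
  define r where "r = \<epsilon> / (2 * real CARD('n))"
  show ?thesis
  proof (rule that)
    show "r > 0" using \<open>\<epsilon> > 0\<close> by (simp add: r_def)
    show "\<forall>y \<in> cbox (y0 - vec r) (y0 + vec r). \<bar>G y0\<bar> / 2 \<le> \<bar>G y\<bar>"
    proof
      fix y assume "y \<in> cbox (y0 - vec r) (y0 + vec r)"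
      then have y: "\<bar>(y - y0) $ i\<bar> \<le> r" for i by (simp add: mem_cube_cart_iff)
      have "dist y y0 \<le> (\<Sum>i\<in>UNIV. \<bar>(y - y0) $ i\<bar>)"
        using norm_le_l1_cart[of "y - y0"] by (simp add: dist_norm)
      also have "\<dots> \<le> real CARD('n) * r"
        using sum_mono[of UNIV "\<lambda>i. \<bar>(y - y0) $ i\<bar>" "\<lambda>_. r"] y by simp
      also have "\<dots> < \<epsilon>" using \<open>\<epsilon> > 0\<close> by (simp add: r_def)
      finally have "dist (G y) (G y0) < \<bar>G y0\<bar> / 2" by (rule \<epsilon>)
      then show "\<bar>G y0\<bar> / 2 \<le> \<bar>G y\<bar>" unfolding dist_real_def by linarith
    qed
  qed
qed

lemma fdiff_axis_tensor_pow_bounded_below: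
  fixes \<psi> :: "real \<Rightarrow> real"
  assumes cont: "continuous_on UNIV \<psi>" and supp: "\<forall>x. \<psi> x \<noteq> 0 \<longrightarrow> x \<in> {-\<eta>..\<eta>}"
    and "\<psi> s \<noteq> 0"
  obtains r \<delta> :: real and y0 :: "real ^ 'n::finite" and i :: 'n
  where "0 < r" "r \<le> 1" "0 < \<delta>" "\<bar>y0 $ i\<bar> \<le> \<eta> + real M"
    and "\<forall>y \<in> cbox (y0 - vec r) (y0 + vec r). \<delta> \<le> \<bar>fdiff M (axis i 1) (tensor_pow \<psi>) y\<bar>"
proof -
  obtain t0 where t0: "fdiff M 1 \<psi> t0 \<noteq> 0"
    using fdiff_1_eq_0_imp_eq_0[of M \<psi> "- \<eta>" s] \<open>\<psi> s \<noteq> 0\<close> supp by force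
  then obtain l where "l \<le> M" "\<psi> (t0 + real l *\<^sub>R 1) \<noteq> 0"
    by (rule fdiff_neq_0E)
  then have t0_near: "\<bar>t0\<bar> \<le> \<eta> + real M"
    using supp of_nat_mono[OF \<open>l \<le> M\<close>] by (force simp: abs_le_iff)
  fix i :: 'n
  define y0 :: "real ^ 'n" where "y0 = (\<chi> k. if k = i then t0 else s)"
  define G where "G = fdiff M (axis i 1) (tensor_pow \<psi>)"
  have "continuous_on UNIV G"
    unfolding G_def using cont by (intro continuous_on_fdiff continuous_on_tensor_pow)
  then have "continuous (at y0) G" by (simp add: continuous_on_eq_continuous_at)
  moreover have "G y0 \<noteq> 0"
    using t0 \<open>\<psi> s \<noteq> 0\<close> by (simp add: G_def fdiff_axis_tensor_pow y0_def)
  ultimately obtain r where "r > 0" and r: "\<forall>y \<in> cbox (y0 - vec r) (y0 + vec r). \<bar>G y0\<bar> / 2 \<le> \<bar>G y\<bar>"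
    by (rule continuous_at_abs_ge_half_on_cube)
  show thesis
  proof (rule that[of "min r 1" "\<bar>G y0\<bar> / 2" y0 i])
    show "\<bar>y0 $ i\<bar> \<le> \<eta> + real M" using t0_near by (simp add: y0_def)
    have "cbox (y0 - vec (min r 1)) (y0 + vec (min r 1)) \<subseteq> cbox (y0 - vec r) (y0 + vec r)"
      by (auto simp: mem_cube_cart_iff)
    then show "\<forall>y \<in> cbox (y0 - vec (min r 1)) (y0 + vec (min r 1)).
        \<bar>G y0\<bar> / 2 \<le> \<bar>fdiff M (axis i 1) (tensor_pow \<psi>) y\<bar>"
      using r by (auto simp: G_def)
  qed (use \<open>r > 0\<close> \<open>G y0 \<noteq> 0\<close> in auto)
qed

lemma emeasure_lebesgue_cube:
  fixes c :: "real ^ 'n"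
  assumes "\<rho> \<ge> 0"
  shows "emeasure lebesgue (cbox (c - vec \<rho>) (c + vec \<rho>)) = ennreal ((2 * \<rho>) ^ CARD('n))"
proof -
  have "c \<in> cbox (c - vec \<rho>) (c + vec \<rho>)"
    using assms by (simp add: mem_box_cart)
  then have "cbox (c - vec \<rho>) (c + vec \<rho>) \<noteq> {}"
    by blast
  then have "measure lborel (cbox (c - vec \<rho>) (c + vec \<rho>)) = (2 * \<rho>) ^ CARD('n)"
    by (simp add: content_cbox_cart)
  then show ?thesis
    by (simp add: emeasure_eq_measure2 emeasure_lborel_cbox_finite)
qed

lemma Lp_norm_ge_on_set:
  fixes g :: "'a::euclidean_space \<Rightarrow> real"
  assumes "p > 0" "m \<ge> 0" "\<mu> \<ge> 0" "S \<in> sets lebesgue" "emeasure lebesgue S = ennreal \<mu>"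
    and ge: "\<And>x. x \<in> S \<Longrightarrow> m \<le> \<bar>g x\<bar>"
  shows "ennreal (m * \<mu> powr (1 / p)) \<le> Lp_norm p g"
proof -
  define I where "I = (\<integral>\<^sup>+ x. ennreal (\<bar>g x\<bar> powr p) \<partial>lebesgue)"
  have "ennreal (m powr p * \<mu>) = (\<integral>\<^sup>+ x. ennreal (m powr p) * indicator S x \<partial>lebesgue)"
    using assms by (simp add: nn_integral_cmult_indicator ennreal_mult)
  also have "\<dots> \<le> I"
    unfolding I_def using assms
    by (intro nn_integral_mono) (auto simp: indicator_def intro!: ennreal_leI powr_mono2)
  finally have I: "ennreal (m powr p * \<mu>) \<le> I" .
  show ?thesis
  proof (cases "I = \<infinity>")
    case False
    with I have "m powr p * \<mu> \<le> enn2real I"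
      using enn2real_mono[OF I] assms(3) by (simp add: top.not_eq_extremum)
    then have "(m powr p * \<mu>) powr (1 / p) \<le> enn2real I powr (1 / p)"
      using assms by (intro powr_mono2) auto
    moreover have "(m powr p * \<mu>) powr (1 / p) = (m powr p) powr (1 / p) * \<mu> powr (1 / p)"
      using assms(3) by (simp add: powr_mult)
    moreover have "(m powr p) powr (1 / p) = m"
      using assms(1,2) by (simp add: powr_powr)
    ultimately show ?thesis
      using False unfolding Lp_norm_def I_def[symmetric] by (auto intro: ennreal_leI)
  qed (simp add: Lp_norm_def I_def)
qed

lemma fsum_near_bump:
  fixes y :: "real ^ 'n"
  assumes "M \<ge> 1" "\<eta> \<ge> 0" "j \<ge> 1"
    and supp: "\<forall>x. \<psi> x \<noteq> 0 \<longrightarrow> x \<in> {-\<eta>..\<eta>}"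
    and near: "2 powr (- real j) * \<bar>y $ i\<bar> \<le> real M + \<eta>"
  shows "fsum M \<eta> \<psi> u (vec (2 * (real M + \<eta>) * real j) + 2 powr (- real j) *\<^sub>R y)
      = u j * tensor_pow \<psi> y"
proof -
  define q where "q = (2::real) powr (- real j)"
  define a where "a k = 2 * (real M + \<eta>) * real k" for k
  define x :: "real ^ 'n" where "x = vec (a j) + q *\<^sub>R y"
  have far: "\<psi> ((x $ i - a k) / 2 powr (- real k)) = 0" if "k \<noteq> j" for k
  proof -
    have "\<bar>real j - real k\<bar> \<ge> 1" using that by linarith
    then have "2 * (real M + \<eta>) \<le> \<bar>a j - a k\<bar>"
      using assms(1,2) by (simp add: a_def abs_mult right_diff_distrib[symmetric])
    moreover have "\<bar>a j - a k\<bar> - \<bar>q * y $ i\<bar> \<le> \<bar>x $ i - a k\<bar>"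
      using abs_triangle_ineq2[of "a j - a k" "- (q * y $ i)"] by (simp add: x_def)
    moreover have "\<bar>q * y $ i\<bar> \<le> real M + \<eta>"
      using near by (simp add: q_def abs_mult)
    moreover have "real M \<ge> 1" using assms(1) by simp
    ultimately have "\<eta> < \<bar>x $ i - a k\<bar>" by (smt (verit))
    also have "\<dots> \<le> \<bar>(x $ i - a k) / 2 powr (- real k)\<bar>"
      using powr_mono[of "- real k" 0 "2::real"] by (simp add: abs_divide le_divide_eq mult_left_le)
    finally show ?thesis using supp by force
  qed
  define F where "F k = u (Suc k) * (\<Prod>i\<in>UNIV. \<psi> ((x $ i - a (Suc k)) / 2 powr (- real (Suc k))))" for k
  have at_j: "(x $ i - a j) / 2 powr (- real j) = y $ i" for i
    by (simp add: x_def q_def)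
  have "F k = (if k = j - 1 then u j * tensor_pow \<psi> y else 0)" for k
  proof (cases "k = j - 1")
    case True
    then show ?thesis using assms(3) by (simp add: F_def tensor_pow_def at_j)
  next
    case False
    then have "Suc k \<noteq> j" using assms(3) by simp
    then have "(\<Prod>i\<in>UNIV. \<psi> ((x $ i - a (Suc k)) / 2 powr (- real (Suc k)))) = 0"
      using far[OF \<open>Suc k \<noteq> j\<close>] by (intro prod_zero[OF finite] bexI[of _ i]) (simp_all only: UNIV_I)
    then have "F k = 0" by (simp add: F_def)
    with False show ?thesis by simp
  qed
  then have "F = (\<lambda>k. if k = j - 1 then u j * tensor_pow \<psi> y else 0)" ..
  then have "F sums (u j * tensor_pow \<psi> y)"
    using sums_single[of "j - 1" "\<lambda>_. u j * tensor_pow \<psi> y"] by simp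
  then show ?thesis
    unfolding fsum_def F_def x_def a_def q_def by (simp add: sums_iff)
qed

lemma fdiff_fsum_near_bump:
  fixes y :: "real ^ 'n"
  assumes "M \<ge> 1" "\<eta> \<ge> 1" "j \<ge> 1"
    and supp: "\<forall>x. \<psi> x \<noteq> 0 \<longrightarrow> x \<in> {-\<eta>..\<eta>}"
    and near: "\<bar>y $ i\<bar> \<le> \<eta> + real M + 1"
  shows "fdiff M (2 powr (- real j) *\<^sub>R axis i 1) (fsum M \<eta> \<psi> u)
            (vec (2 * (real M + \<eta>) * real j) + 2 powr (- real j) *\<^sub>R y)
      = u j * fdiff M (axis i 1) (tensor_pow \<psi>) y"
proof -
  have "2 powr (- real j) \<le> (2::real) powr (-1)"
    using assms(3) by (intro powr_mono) auto
  then have q: "2 powr (- real j) \<le> (1/2::real)" by (simp add: powr_minus)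
  have "fsum M \<eta> \<psi> u (vec (2 * (real M + \<eta>) * real j) + 2 powr (- real j) *\<^sub>R z)
      = u j * tensor_pow \<psi> z" if "z = y + real l *\<^sub>R axis i 1" "l \<le> M" for z l
  proof (rule fsum_near_bump[OF assms(1) _ assms(3) supp])
    have "\<bar>z $ i\<bar> \<le> \<eta> + 2 * real M + 1" using near that by (simp add: axis_def)
    then have "2 powr (- real j) * \<bar>z $ i\<bar> \<le> 1/2 * (\<eta> + 2 * real M + 1)"
      using q by (intro mult_mono) auto
    then show "2 powr (- real j) * \<bar>z $ i\<bar> \<le> real M + \<eta>" using assms(2) by simp
  qed (use assms(2) in simp)
  then have "fdiff M (axis i 1) (\<lambda>z. fsum M \<eta> \<psi> u (vec (2 * (real M + \<eta>) * real j) + 2 powr (- real j) *\<^sub>R z)) y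
      = fdiff M (axis i 1) (\<lambda>z. u j * tensor_pow \<psi> z) y"
    by (intro fdiff_cong) blast
  then show ?thesis by (simp add: fdiff_affine fdiff_cmult)
qed

lemma Lp_norm_fdiff_fsum_ge:
  fixes z :: "real ^ 'n"
  assumes "M \<ge> 1" "\<eta> \<ge> 1" "p > 0" "j \<ge> 1" "u j \<ge> 0" "\<delta> \<ge> 0" "0 < r" "r \<le> 1"
    and supp: "\<forall>x. \<psi> x \<noteq> 0 \<longrightarrow> x \<in> {-\<eta>..\<eta>}"
    and near: "\<bar>z $ i\<bar> \<le> \<eta> + real M"
    and bound: "\<forall>y \<in> cbox (z - vec r) (z + vec r). \<delta> \<le> \<bar>fdiff M (axis i 1) (tensor_pow \<psi>) y\<bar>"
  shows "ennreal (\<delta> * (2 * r) powr (real CARD('n) / p) * u j * 2 powr (- real j * real CARD('n) / p))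
       \<le> Lp_norm p (fdiff M (2 powr (- real j) *\<^sub>R axis i 1) (fsum M \<eta> \<psi> u))"
proof -
  define q where "q = (2::real) powr (- real j)"
  define a :: "real ^ 'n" where "a = vec (2 * (real M + \<eta>) * real j)"
  define S where "S = cbox (a + q *\<^sub>R z - vec (q * r)) (a + q *\<^sub>R z + vec (q * r))"
  have q: "q > 0" by (simp add: q_def)
  have "u j * \<delta> \<le> \<bar>fdiff M (q *\<^sub>R axis i 1) (fsum M \<eta> \<psi> u) x\<bar>" if "x \<in> S" for x
  proof -
    define y where "y = (1 / q) *\<^sub>R (x - a)"
    have x: "x = a + q *\<^sub>R y" using q by (simp add: y_def)
    have "\<bar>q * (y $ k - z $ k)\<bar> \<le> q * r" for k
      using \<open>x \<in> S\<close> unfolding S_def mem_cube_cart_iff by (simp add: x algebra_simps)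
    then have "\<bar>y $ k - z $ k\<bar> \<le> r" for k using q by (simp add: abs_mult)
    then have cube: "y \<in> cbox (z - vec r) (z + vec r)" by (simp add: mem_cube_cart_iff)
    have "\<bar>y $ i\<bar> \<le> \<eta> + real M + 1"
      using abs_triangle_ineq[of "z $ i" "y $ i - z $ i"] \<open>\<bar>y $ i - z $ i\<bar> \<le> r\<close> near assms(8) by simp
    then have "fdiff M (q *\<^sub>R axis i 1) (fsum M \<eta> \<psi> u) x = u j * fdiff M (axis i 1) (tensor_pow \<psi>) y"
      unfolding x a_def q_def by (rule fdiff_fsum_near_bump[OF assms(1,2,4) supp])
    with bound cube show ?thesis using assms(5) by (simp add: abs_mult mult_left_mono)
  qed
  moreover have "S \<in> sets lebesgue" by (simp add: S_def fmeasurableD)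
  moreover have "emeasure lebesgue S = ennreal ((2 * (q * r)) ^ CARD('n))"
    unfolding S_def using q assms(7) by (intro emeasure_lebesgue_cube) simp
  ultimately have "ennreal (u j * \<delta> * ((2 * (q * r)) ^ CARD('n)) powr (1 / p))
      \<le> Lp_norm p (fdiff M (q *\<^sub>R axis i 1) (fsum M \<eta> \<psi> u))"
    using q assms(3,5,6,7) by (intro Lp_norm_ge_on_set) auto
  also have "u j * \<delta> * ((2 * (q * r)) ^ CARD('n)) powr (1 / p)
      = \<delta> * (2 * r) powr (real CARD('n) / p) * u j * 2 powr (- real j * real CARD('n) / p)"
  proof -
    have "((2 * (q * r)) ^ CARD('n)) powr (1 / p) = (2 * r) powr (real CARD('n) / p) * q powr (real CARD('n) / p)"
      using q assms(7) by (simp add: powr_realpow[symmetric] powr_powr powr_mult)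
    moreover have "q powr (real CARD('n) / p) = 2 powr (- real j * real CARD('n) / p)"
      by (simp add: q_def powr_powr)
    ultimately show ?thesis by (simp add: ac_simps)
  qed
  finally show ?thesis unfolding q_def .
qed

theorem lemma8p2:
  fixes M :: nat and p \<eta> :: real and \<psi> :: "real \<Rightarrow> real"
  assumes "M \<ge> 1" and "p \<ge> 1" and "\<eta> \<ge> 1"
    and "smooth_real \<psi>"
    and "\<forall>x. \<psi> x \<noteq> 0 \<longrightarrow> x \<in> {-\<eta>..\<eta>}"
    and "\<not> (\<exists>q :: real poly. degree q \<le> M - 1 \<and> \<psi> = poly q)"
  shows "\<exists>c > 0. \<forall>u :: nat \<Rightarrow> real. (\<forall>k. u k \<ge> 0) \<longrightarrow>
           (\<forall>j \<ge> 1. (SUP h \<in> {h :: real ^ 'n. 2 powr (- real (j + 1)) \<le> norm h \<and> norm h \<le> 2 powr (- real j)}.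
                       Lp_norm p (fdiff M h (fsum M \<eta> \<psi> u)))
                     \<ge> ennreal (c * u j * 2 powr (- real j * real CARD('n) / p)))"
proof -
  have "\<psi> \<noteq> poly 0" using assms(6) by (metis degree_0 zero_le)
  then obtain s where "\<psi> s \<noteq> 0" by (auto simp: fun_eq_iff)
  with smooth_real_imp_continuous[OF assms(4)] assms(5)
  obtain r \<delta> :: real and y0 :: "real ^ 'n" and i :: 'n
    where "0 < r" "r \<le> 1" "0 < \<delta>" "\<bar>y0 $ i\<bar> \<le> \<eta> + real M"
      and bound: "\<forall>y \<in> cbox (y0 - vec r) (y0 + vec r). \<delta> \<le> \<bar>fdiff M (axis i 1) (tensor_pow \<psi>) y\<bar>"
    by (rule fdiff_axis_tensor_pow_bounded_below)
  show ?thesis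
  proof (intro exI[of _ "\<delta> * (2 * r) powr (real CARD('n) / p)"] conjI allI impI)
    show "\<delta> * (2 * r) powr (real CARD('n) / p) > 0" using \<open>0 < r\<close> \<open>0 < \<delta>\<close> by simp
    fix u :: "nat \<Rightarrow> real" and j :: nat
    assume "\<forall>k. 0 \<le> u k" "1 \<le> j"
    then have "ennreal (\<delta> * (2 * r) powr (real CARD('n) / p) * u j * 2 powr (- real j * real CARD('n) / p))
        \<le> Lp_norm p (fdiff M (2 powr (- real j) *\<^sub>R axis i 1) (fsum M \<eta> \<psi> u))"
      using assms \<open>0 < r\<close> \<open>r \<le> 1\<close> \<open>0 < \<delta>\<close> \<open>\<bar>y0 $ i\<bar> \<le> \<eta> + real M\<close> bound
      by (intro Lp_norm_fdiff_fsum_ge[where z = y0]) auto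
    also have "\<dots> \<le> (SUP h \<in> {h :: real ^ 'n. 2 powr (- real (j + 1)) \<le> norm h \<and> norm h \<le> 2 powr (- real j)}.
                       Lp_norm p (fdiff M h (fsum M \<eta> \<psi> u)))"
      by (rule SUP_upper) (simp add: powr_mono)
    finally show "ennreal (\<delta> * (2 * r) powr (real CARD('n) / p) * u j * 2 powr (- real j * real CARD('n) / p))
        \<le> (SUP h \<in> {h :: real ^ 'n. 2 powr (- real (j + 1)) \<le> norm h \<and> norm h \<le> 2 powr (- real j)}.
                       Lp_norm p (fdiff M h (fsum M \<eta> \<psi> u)))" .
  qed
qed

end
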